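(* Assume $2k+1 \le n/4$. For every randomized algorithm that makes at most $n/4$ comparison queries and outputs a set of $2k+1$ elements, there exists an instance (with $n$ elements, $k$ of them corrupted) on which the probability that the output set contains the uncorrupted maximum is at most $3/4$.
   Context: Model: there are $n$ elements $x_1,\dots,x_n$, exactly $k$ of which are corrupted (unknown to the algorithm). For every pair of distinct elements the comparison graph (a tournament) specifies which one is larger. The comparison graph restricted to the $n-k$ uncorrupted elements is acyclic; comparisons involving corrupted elements may be oriented arbitrarily. The uncorrupted maximum is the uncorrupted element larger than every other uncorrupted element. An algorithm knows $n$ and $k$, may query the orientation of any pair (a comparison query), and outputs a set of elements. *)

theory Defs
  imports "HOL-Probability.Probability"
begin

text \<open>Elements are 0,...,n-1.  A comparison graph is a relation T where
  T i j means "element i is larger than element j".  Outside the element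
  range T is False (so queries of out-of-range pairs carry no information).\<close>

definition tournament :: "nat \<Rightarrow> (nat \<Rightarrow> nat \<Rightarrow> bool) \<Rightarrow> bool" where
  "tournament n T \<longleftrightarrow>
     (\<forall>i j. T i j \<longrightarrow> i < n \<and> j < n \<and> i \<noteq> j) \<and>
     (\<forall>i<n. \<forall>j<n. i \<noteq> j \<longrightarrow> (T i j \<longleftrightarrow> \<not> T j i))"

definition valid_instance :: "nat \<Rightarrow> nat \<Rightarrow> (nat \<Rightarrow> nat \<Rightarrow> bool) \<Rightarrow> nat set \<Rightarrow> bool" where
  "valid_instance n k T C \<longleftrightarrow>
     tournament n T \<and> C \<subseteq> {0..<n} \<and> card C = k \<and>
     acyclic {(i, j). i \<in> {0..<n} - C \<and> j \<in> {0..<n} - C \<and> T i j}"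

definition unc_max :: "nat \<Rightarrow> (nat \<Rightarrow> nat \<Rightarrow> bool) \<Rightarrow> nat set \<Rightarrow> nat \<Rightarrow> bool" where
  "unc_max n T C u \<longleftrightarrow> u \<in> {0..<n} - C \<and> (\<forall>v \<in> {0..<n} - C. v \<noteq> u \<longrightarrow> T u v)"

text \<open>Deterministic adaptive comparison algorithms as decision trees:
  Query i j f asks whether i is larger than j and continues with f answer.\<close>

datatype dtree = Query nat nat "bool \<Rightarrow> dtree" | Output "nat set"

primrec run :: "dtree \<Rightarrow> (nat \<Rightarrow> nat \<Rightarrow> bool) \<Rightarrow> nat set" where
  "run (Output S) T = S"
| "run (Query i j f) T = run (f (T i j)) T"

primrec num_queries :: "dtree \<Rightarrow> (nat \<Rightarrow> nat \<Rightarrow> bool) \<Rightarrow> nat" where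
  "num_queries (Output S) T = 0"
| "num_queries (Query i j f) T = Suc (num_queries (f (T i j)) T)"

text \<open>A randomized algorithm is a probability distribution over decision trees.\<close>

end

theory Submission
  imports Defs
begin

text \<open>Take the baseline tournament in which larger indices win and, for each element u, the
  tournament promote n u obtained from it by moving u to the top.  A decision tree that never
  compares u runs identically on both, so for a fixed tree only its at most 2(n/4) queried
  elements and its 2k+1 baseline outputs can be output on promote n u by u itself.  Summing over
  u, the probabilities that u is output on promote n u add up to at most 3n/4, so one of them is
  at most 3/4; corrupting only elements other than u keeps u the uncorrupted maximum.\<close>

lemma exists_prob_le_of_card_bound:
  fixes A :: "'a pmf" and E :: "'i \<Rightarrow> 'a set" and I :: "'i set"
  assumes "finite I" "I \<noteq> {}"
    and bound: "\<And>t. t \<in> set_pmf A \<Longrightarrow> real (card {u \<in> I. t \<in> E u}) \<le> c * real (card I)"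
  shows "\<exists>u\<in>I. measure_pmf.prob A (E u) \<le> c"
proof (rule ccontr)
  assume "\<not> ?thesis"
  then have "(\<Sum>u\<in>I. c) < (\<Sum>u\<in>I. measure_pmf.prob A (E u))"
    using assms(1,2) by (intro sum_strict_mono) auto
  also have "\<dots> = measure_pmf.expectation A (\<lambda>t. \<Sum>u\<in>I. indicator (E u) t)"
    by (simp add: integral_sum measure_pmf.integrable_const_bound[where B=1])
  also have "\<dots> = measure_pmf.expectation A (\<lambda>t. real (card {u \<in> I. t \<in> E u}))"
    using \<open>finite I\<close> by (simp add: indicator_def sum.If_cases Int_def)
  also have "\<dots> \<le> measure_pmf.expectation A (\<lambda>_. c * real (card I))"
  proof (rule integral_mono_AE)
    show "integrable (measure_pmf A) (\<lambda>t. real (card {u \<in> I. t \<in> E u}))"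
      using \<open>finite I\<close>
      by (intro measure_pmf.integrable_const_bound[where B="real (card I)"]) (auto intro: card_mono)
  qed (use bound in \<open>auto simp: AE_measure_pmf_iff\<close>)
  finally show False by simp
qed

primrec queried :: "dtree \<Rightarrow> (nat \<Rightarrow> nat \<Rightarrow> bool) \<Rightarrow> nat set" where
  "queried (Output S) T = {}"
| "queried (Query i j f) T = {i, j} \<union> queried (f (T i j)) T"

lemma finite_queried: "finite (queried t T)"
  by (induction t) auto

lemma card_queried_le: "card (queried t T) \<le> 2 * num_queries t T"
proof (induction t)
  case (Query i j f)
  have "card (queried (Query i j f) T) \<le> card {i, j} + card (queried (f (T i j)) T)"
    using card_Un_le[of "{i, j}"] by simp
  moreover have "card {i, j} \<le> 2"
    by (simp add: card_insert_if)
  ultimately show ?case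
    using Query.IH[of "f (T i j)"] by simp
qed simp

lemma run_eq_if_not_queried:
  assumes "u \<notin> queried t T" "\<And>i j. i \<noteq> u \<Longrightarrow> j \<noteq> u \<Longrightarrow> T' i j = T i j"
  shows "run t T' = run t T"
  using assms(1) by (induction t) (auto simp: assms(2))

lemma acyclic_of_rank:
  fixes f :: "'a \<Rightarrow> nat"
  assumes "\<And>a b. (a, b) \<in> r \<Longrightarrow> f b < f a"
  shows "acyclic r"
proof -
  have "r\<inverse> \<subseteq> Wellfounded.measure f" using assms by auto
  then have "acyclic (r\<inverse>)" by (meson wf_acyclic wf_measure wf_subset)
  then show ?thesis by (simp add: acyclic_converse)
qed

lemma valid_instance_avoiding:
  fixes f :: "nat \<Rightarrow> nat"
  assumes "tournament n T" "\<And>i j. T i j \<Longrightarrow> f j < f i" "k < n" "u < n"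
  shows "\<exists>C. valid_instance n k T C \<and> u \<notin> C"
proof -
  have "k \<le> card ({0..<n} - {u})" using assms(3,4) by simp
  then obtain C where "C \<subseteq> {0..<n} - {u}" "card C = k"
    using obtain_subset_with_card_n by blast
  moreover have "acyclic {(i, j). i \<in> {0..<n} - C \<and> j \<in> {0..<n} - C \<and> T i j}"
    by (rule acyclic_of_rank[where f=f]) (auto intro: assms(2))
  ultimately show ?thesis using assms(1) unfolding valid_instance_def by blast
qed

definition index_order :: "nat \<Rightarrow> nat \<Rightarrow> nat \<Rightarrow> bool" where
  "index_order n i j \<longleftrightarrow> i < n \<and> j < n \<and> j < i"

definition promote :: "nat \<Rightarrow> nat \<Rightarrow> nat \<Rightarrow> nat \<Rightarrow> bool" where
  "promote n u i j \<longleftrightarrow> i < n \<and> j < n \<and> i \<noteq> j \<and> (i = u \<or> (j \<noteq> u \<and> j < i))"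

lemma tournament_index_order: "tournament n (index_order n)"
  unfolding tournament_def index_order_def by auto

lemma tournament_promote: "tournament n (promote n u)"
  unfolding tournament_def promote_def by auto

lemma promote_eq_index_order: "i \<noteq> u \<Longrightarrow> j \<noteq> u \<Longrightarrow> promote n u i j = index_order n i j"
  unfolding promote_def index_order_def by auto

lemma unc_max_promote_iff: "u < n \<Longrightarrow> u \<notin> C \<Longrightarrow> unc_max n (promote n u) C v \<longleftrightarrow> v = u"
  unfolding unc_max_def promote_def by auto

lemma card_promoted_in_run_le:
  assumes "finite (run t (index_order n))"
  shows "card {u \<in> {0..<n}. u \<in> run t (promote n u)}
           \<le> 2 * num_queries t (index_order n) + card (run t (index_order n))"
proof -
  have "{u \<in> {0..<n}. u \<in> run t (promote n u)} \<subseteq> queried t (index_order n) \<union> run t (index_order n)"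
  proof
    fix u assume "u \<in> {u \<in> {0..<n}. u \<in> run t (promote n u)}"
    then show "u \<in> queried t (index_order n) \<union> run t (index_order n)"
      using run_eq_if_not_queried[of u t "index_order n" "promote n u"] promote_eq_index_order by auto
  qed
  then have "card {u \<in> {0..<n}. u \<in> run t (promote n u)}
               \<le> card (queried t (index_order n)) + card (run t (index_order n))"
    by (meson assms card_Un_le card_mono finite_UnI finite_queried order_trans)
  then show ?thesis using card_queried_le[of t "index_order n"] by linarith
qed

theorem mainTheorem7:
  fixes n k :: nat and A :: "dtree pmf"
  assumes "real (2 * k + 1) \<le> real n / 4"
    and "\<forall>t \<in> set_pmf A. \<forall>T C. valid_instance n k T C \<longrightarrow>
            real (num_queries t T) \<le> real n / 4 \<and>
            run t T \<subseteq> {0..<n} \<and> card (run t T) = 2 * k + 1"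
  shows "\<exists>T C. valid_instance n k T C \<and>
           measure_pmf.prob A {t. \<exists>u. unc_max n T C u \<and> u \<in> run t T} \<le> 3 / 4"
proof -
  have "k < n" using assms(1) by linarith
  have "index_order n i j \<Longrightarrow> j < i" for i j by (simp add: index_order_def)
  then obtain C0 where C0: "valid_instance n k (index_order n) C0"
    using valid_instance_avoiding[OF tournament_index_order _ \<open>k < n\<close>, where f=id and u=0] \<open>k < n\<close>
    by auto
  define E where "E u = {t. u \<in> run t (promote n u)}" for u
  have "real (card {u \<in> {0..<n}. t \<in> E u}) \<le> 3 / 4 * real (card {0..<n})"
    if "t \<in> set_pmf A" for t
  proof -
    have q: "real (num_queries t (index_order n)) \<le> real n / 4"
      and "card (run t (index_order n)) = 2 * k + 1"
      using assms(2) that C0 by auto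
    then have "card {u \<in> {0..<n}. t \<in> E u} \<le> 2 * num_queries t (index_order n) + (2 * k + 1)"
      using card_promoted_in_run_le[of t n] card_ge_0_finite[of "run t (index_order n)"]
      by (simp add: E_def)
    then show ?thesis using q assms(1) by simp
  qed
  then obtain u where "u < n" and u: "measure_pmf.prob A (E u) \<le> 3 / 4"
    using exists_prob_le_of_card_bound[of "{0..<n}" A E "3 / 4"] \<open>k < n\<close> by auto
  have "\<exists>C. valid_instance n k (promote n u) C \<and> u \<notin> C"
    by (rule valid_instance_avoiding[where f="\<lambda>x. if x = u then n else x"])
       (use tournament_promote \<open>k < n\<close> \<open>u < n\<close> in \<open>auto simp: promote_def\<close>)
  then obtain C where C: "valid_instance n k (promote n u) C" "u \<notin> C" by blast
  have "{t. \<exists>v. unc_max n (promote n u) C v \<and> v \<in> run t (promote n u)} = E u"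
    using unc_max_promote_iff[OF \<open>u < n\<close> C(2)] by (auto simp: E_def)
  then show ?thesis using C u by metis
qed

end
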